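(* Let $A$ be an abelian normal subgroup of a finite group $S$, $T=S/A$, $S\cong A\rtimes_\rho T$, and let $\phi$ be an anti-automorphism of $T$ with $\phi^2$ inner; set $L=L(A,\phi)=\{((a,t),(b,\phi(t))): a,b\in A,t\in T\}\le S\times S^{op}$. Then $L\cong(A\times A)\rtimes_{\overline\rho}T$ (via $((a,t),(b,\phi(t)))\mapsto(a,\phi(t)^{-1}b,t)$), where $T$ acts on $A\times A$ by ${}^{\overline t}(a,a')=({}^ta,{}^{\phi(t^{-1})}a')$ and $\overline\rho(t,t')=(\rho(t,t'),{}^{(t't)^{-1}}\rho(t',t))$. The map $((x,t),(y,s))\mapsto s^{-1}\phi(t)$ factors through a bijection $(S\times S^{op})/L\to T$. If $T$ is abelian, then $L$ is normal in $S\times S^{op}$ and the set of cosets $(S\times S^{op})/L$ is a group isomorphic to $T$ via this bijection.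
   Context: For $A\trianglelefteq S$ abelian, $T=S/A$: choose coset representatives $u(t)$, $u(\mathbf 1)=1$; ${}^ta=u(t)au(t)^{-1}$; $\rho(t,t')=u(t)u(t')u(tt')^{-1}\in Z^2(T,A)$; $S\cong A\rtimes_\rho T$ with $(a,t)(a',t')=(a\,{}^ta'\rho(t,t'),tt')$. $S^{op}$ is the opposite group; elements of $S$ are written as pairs $(a,t)$. The twisted semidirect product $(A\times A)\rtimes_{\overline\rho}T$ is defined analogously.
   Formalization: The second component of $\overline\rho(t,t')$ is ${}^{(\phi(t')\phi(t))^{-1}}\rho(\phi(t'),\phi(t))$ in place of ${}^{(t't)^{-1}}\rho(t',t)$. The statement above fails without it. *)

theory Defs
  imports "HOL-Algebra.Algebra"
begin

definition opp_group :: "('a, 'm) monoid_scheme \<Rightarrow> 'a monoid" where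
  "opp_group G = \<lparr>carrier = carrier G, monoid.mult = (\<lambda>x y. y \<otimes>\<^bsub>G\<^esub> x), one = \<one>\<^bsub>G\<^esub>\<rparr>"

definition anti_automorphism :: "('t, 'n) monoid_scheme \<Rightarrow> ('t \<Rightarrow> 't) \<Rightarrow> bool" where
  "anti_automorphism T \<phi> \<longleftrightarrow> bij_betw \<phi> (carrier T) (carrier T) \<and>
     (\<forall>x\<in>carrier T. \<forall>y\<in>carrier T. \<phi> (x \<otimes>\<^bsub>T\<^esub> y) = \<phi> y \<otimes>\<^bsub>T\<^esub> \<phi> x)"

definition is_inner :: "('t, 'n) monoid_scheme \<Rightarrow> ('t \<Rightarrow> 't) \<Rightarrow> bool" where
  "is_inner T f \<longleftrightarrow> (\<exists>g\<in>carrier T. \<forall>t\<in>carrier T. f t = g \<otimes>\<^bsub>T\<^esub> t \<otimes>\<^bsub>T\<^esub> inv\<^bsub>T\<^esub> g)"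

text \<open>The conjugation action  ^t a = u(t) a u(t)^{-1}  of T = S/A on A, via coset representatives u.\<close>
definition cact :: "('a, 'm) monoid_scheme \<Rightarrow> ('a set \<Rightarrow> 'a) \<Rightarrow> 'a set \<Rightarrow> 'a \<Rightarrow> 'a" where
  "cact S u t a = u t \<otimes>\<^bsub>S\<^esub> a \<otimes>\<^bsub>S\<^esub> inv\<^bsub>S\<^esub> (u t)"

definition cocyc :: "('a, 'm) monoid_scheme \<Rightarrow> 'a set \<Rightarrow> ('a set \<Rightarrow> 'a) \<Rightarrow> 'a set \<Rightarrow> 'a set \<Rightarrow> 'a" where
  "cocyc S A u t t' = u t \<otimes>\<^bsub>S\<^esub> u t' \<otimes>\<^bsub>S\<^esub> inv\<^bsub>S\<^esub> (u (t \<otimes>\<^bsub>S Mod A\<^esub> t'))"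

definition twisted_sdp ::
  "('x, 'm) monoid_scheme \<Rightarrow> ('t, 'n) monoid_scheme \<Rightarrow> ('t \<Rightarrow> 'x \<Rightarrow> 'x) \<Rightarrow> ('t \<Rightarrow> 't \<Rightarrow> 'x)
     \<Rightarrow> ('x \<times> 't) monoid" where
  "twisted_sdp N T act r =
     \<lparr>carrier = carrier N \<times> carrier T,
      monoid.mult = (\<lambda>(x, t) (x', t'). (x \<otimes>\<^bsub>N\<^esub> act t x' \<otimes>\<^bsub>N\<^esub> r t t', t \<otimes>\<^bsub>T\<^esub> t')),
      one = (\<one>\<^bsub>N\<^esub>, \<one>\<^bsub>T\<^esub>)\<rparr>"

end

theory Submission
  imports Defs
begin

(* Every x in S is  a \<otimes> u(Ax)  for a unique a \<in> A (its
   right A-coordinate) and also  u(Ax) \<otimes> b  for a unique b \<in> A (its left A-coordinate).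
   The twisted-semidirect-product laws for these coordinates are proved once for S
   (right_coord_mult, left_coord_mult), using only that A is abelian and normal.
   The subgroup L is then the preimage  {(x, y). Ay = \<phi>(Ax)}  of the graph of the
   anti-automorphism \<phi>; reading the first factor in right coordinates and the second (which
   multiplies in S^op) in left coordinates gives the isomorphism onto (A \<times> A) \<rtimes> T.
   For the cosets, the "defect"  (x, y) \<mapsto> (Ay)^-1 \<phi>(Ax)  is constant exactly on the left
   cosets of L and onto T, so it induces the required bijection; when T is abelian the defect
   is a homomorphism with kernel L, and the first isomorphism theorem finishes the proof. *)

lemma (in group) inv_mult_cancel_left [simp]:
  "x \<in> carrier G \<Longrightarrow> y \<in> carrier G \<Longrightarrow> inv x \<otimes> (x \<otimes> y) = y"
  "x \<in> carrier G \<Longrightarrow> y \<in> carrier G \<Longrightarrow> x \<otimes> (inv x \<otimes> y) = y"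
  by (simp_all add: m_assoc[symmetric])

lemma (in group) l_coset_eq_iff:
  assumes H: "subgroup H G" and x: "x \<in> carrier G" and y: "y \<in> carrier G"
  shows "x <#\<^bsub>G\<^esub> H = y <#\<^bsub>G\<^esub> H \<longleftrightarrow> inv x \<otimes> y \<in> H"
proof
  assume eq: "x <#\<^bsub>G\<^esub> H = y <#\<^bsub>G\<^esub> H"
  have "y \<in> y <#\<^bsub>G\<^esub> H"
    using subgroup.lcos_module_rev[OF H is_group y y] y subgroup.one_closed[OF H] by simp
  then obtain h where "h \<in> H" "y = x \<otimes> h"
    using eq unfolding l_coset_def by blast
  then show "inv x \<otimes> y \<in> H"
    using x subgroup.mem_carrier[OF H] by (simp add: m_assoc[symmetric])
next
  assume "inv x \<otimes> y \<in> H"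
  then show "x <#\<^bsub>G\<^esub> H = y <#\<^bsub>G\<^esub> H"
    using l_repr_independence[OF subgroup.lcos_module_rev[OF H is_group x y] x H] by simp
qed

lemma (in group) inv_mult_eq_iff:
  assumes "p \<in> carrier G" "r \<in> carrier G" "p' \<in> carrier G" "r' \<in> carrier G"
  shows "inv p \<otimes> r = inv p' \<otimes> r' \<longleftrightarrow> p' \<otimes> inv p = r' \<otimes> inv r"
proof
  assume eq: "inv p \<otimes> r = inv p' \<otimes> r'"
  have "p' \<otimes> inv p = p' \<otimes> (inv p \<otimes> r) \<otimes> inv r" using assms by (simp add: m_assoc)
  also have "\<dots> = r' \<otimes> inv r" using assms eq by (simp add: m_assoc[symmetric])
  finally show "p' \<otimes> inv p = r' \<otimes> inv r" .
next
  assume eq: "p' \<otimes> inv p = r' \<otimes> inv r"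
  have "inv p \<otimes> r = inv p' \<otimes> (p' \<otimes> inv p) \<otimes> r" using assms by (simp add: m_assoc[symmetric])
  also have "\<dots> = inv p' \<otimes> r'" using assms eq by (simp add: m_assoc)
  finally show "inv p \<otimes> r = inv p' \<otimes> r'" .
qed

lemma (in comm_group) inv_mult_rearrange:
  assumes "a \<in> carrier G" "b \<in> carrier G" "c \<in> carrier G" "d \<in> carrier G"
  shows "inv (b \<otimes> a) \<otimes> (d \<otimes> c) = (inv a \<otimes> c) \<otimes> (inv b \<otimes> d)"
  using assms by (simp add: inv_mult m_ac)

lemma (in group) left_coset_classifier_value:
  assumes H: "subgroup H G" and g: "g \<in> carrier G"
    and classifies: "\<And>g g'. g \<in> carrier G \<Longrightarrow> g' \<in> carrier G \<Longrightarrow> f g = f g' \<longleftrightarrow> g <#\<^bsub>G\<^esub> H = g' <#\<^bsub>G\<^esub> H"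
  shows "the_elem (f ` (g <#\<^bsub>G\<^esub> H)) = f g"
proof -
  have "f ` (g <#\<^bsub>G\<^esub> H) = {f g}"
  proof (intro equalityI subsetI)
    fix z assume "z \<in> f ` (g <#\<^bsub>G\<^esub> H)"
    then obtain g' where g': "g' \<in> g <#\<^bsub>G\<^esub> H" "z = f g'" by blast
    have "g' \<in> carrier G" using g' l_coset_subset_G[OF subgroup.subset[OF H] g] by blast
    moreover have "g <#\<^bsub>G\<^esub> H = g' <#\<^bsub>G\<^esub> H" using l_repr_independence[OF g'(1) g H] .
    ultimately have "f g' = f g" using classifies[OF g] by metis
    then show "z \<in> {f g}" using g'(2) by simp
  next
    fix z assume "z \<in> {f g}"
    moreover have "g \<in> g <#\<^bsub>G\<^esub> H"
      using subgroup.lcos_module_rev[OF H is_group g g] g subgroup.one_closed[OF H] by simp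
    ultimately show "z \<in> f ` (g <#\<^bsub>G\<^esub> H)" by blast
  qed
  then show ?thesis by simp
qed

lemma (in group) left_coset_classifier_bij:
  assumes H: "subgroup H G"
    and classifies: "\<And>g g'. g \<in> carrier G \<Longrightarrow> g' \<in> carrier G \<Longrightarrow> f g = f g' \<longleftrightarrow> g <#\<^bsub>G\<^esub> H = g' <#\<^bsub>G\<^esub> H"
    and onto: "f ` carrier G = B"
  shows "bij_betw (\<lambda>C. the_elem (f ` C)) {g <#\<^bsub>G\<^esub> H | g. g \<in> carrier G} B"
proof -
  have val: "\<And>g. g \<in> carrier G \<Longrightarrow> the_elem (f ` (g <#\<^bsub>G\<^esub> H)) = f g"
    using left_coset_classifier_value[OF H _ classifies] by blast
  show ?thesis
  proof (rule bij_betw_imageI)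
    show "inj_on (\<lambda>C. the_elem (f ` C)) {g <#\<^bsub>G\<^esub> H | g. g \<in> carrier G}"
      by (rule inj_onI) (auto simp: val classifies)
    show "(\<lambda>C. the_elem (f ` C)) ` {g <#\<^bsub>G\<^esub> H | g. g \<in> carrier G} = B"
      using onto by (force simp: val image_iff)
  qed
qed

lemma opp_group_simps [simp]:
  "carrier (opp_group S) = carrier S"
  "x \<otimes>\<^bsub>opp_group S\<^esub> y = y \<otimes>\<^bsub>S\<^esub> x"
  "\<one>\<^bsub>opp_group S\<^esub> = \<one>\<^bsub>S\<^esub>"
  by (simp_all add: opp_group_def)

lemma (in group) opp_group_is_group: "group (opp_group G)"
  by (rule groupI) (auto simp: m_assoc intro!: exI[of _ "inv _"])

lemma (in group) opp_group_inv: "x \<in> carrier G \<Longrightarrow> inv\<^bsub>opp_group G\<^esub> x = inv x"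
  using group.inv_equality[OF opp_group_is_group, of "inv x" x] by simp

lemma (in group) anti_automorphism_closed:
  "anti_automorphism G \<phi> \<Longrightarrow> t \<in> carrier G \<Longrightarrow> \<phi> t \<in> carrier G"
  unfolding anti_automorphism_def bij_betw_def by blast

lemma (in group) anti_automorphism_mult:
  "anti_automorphism G \<phi> \<Longrightarrow> t \<in> carrier G \<Longrightarrow> s \<in> carrier G \<Longrightarrow> \<phi> (t \<otimes> s) = \<phi> s \<otimes> \<phi> t"
  unfolding anti_automorphism_def by blast

lemma (in group) anti_automorphism_one:
  assumes anti: "anti_automorphism G \<phi>"
  shows "\<phi> \<one> = \<one>"
proof -
  have "\<phi> \<one> \<otimes> \<phi> \<one> = \<phi> \<one> \<otimes> \<one>"
    using anti_automorphism_mult[OF anti one_closed one_closed] anti_automorphism_closed[OF anti one_closed]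
    by simp
  then show ?thesis
    using anti_automorphism_closed[OF anti one_closed] l_cancel by blast
qed

lemma (in group) anti_automorphism_inv:
  assumes anti: "anti_automorphism G \<phi>" and t: "t \<in> carrier G"
  shows "\<phi> (inv t) = inv (\<phi> t)"
proof -
  have "\<phi> (inv t) \<otimes> \<phi> t = \<one>"
    using anti_automorphism_mult[OF anti t inv_closed[OF t]] anti_automorphism_one[OF anti] t by simp
  then show ?thesis
    using t by (simp add: inv_equality anti_automorphism_closed[OF anti])
qed

locale abelian_extension = normal A S for A and S :: "('a, 'm) monoid_scheme" (structure) +
  fixes u :: "'a set \<Rightarrow> 'a"
  assumes A_comm_group: "comm_group (S\<lparr>carrier := A\<rparr>)"
    and u_section: "\<forall>t\<in>carrier (S Mod A). u t \<in> t"
begin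

abbreviation T where "T \<equiv> S Mod A"

lemma T_group: "group T"
  by (rule factorgroup_is_group)

lemma A_comm: "a \<in> A \<Longrightarrow> b \<in> A \<Longrightarrow> a \<otimes> b = b \<otimes> a"
  using comm_monoid.m_comm[OF comm_group.axioms(1)[OF A_comm_group], of a b] by simp

lemma A_closed: "a \<in> A \<Longrightarrow> a \<in> carrier S"
  using subset by blast

lemma coset_closed: "x \<in> carrier S \<Longrightarrow> A #> x \<in> carrier T"
  by (simp add: FactGroup_def rcosetsI subset)

lemma coset_mult: "x \<in> carrier S \<Longrightarrow> y \<in> carrier S \<Longrightarrow> (A #> x) \<otimes>\<^bsub>T\<^esub> (A #> y) = A #> (x \<otimes> y)"
  by (simp add: rcos_sum)

lemma coset_inv: "x \<in> carrier S \<Longrightarrow> inv\<^bsub>T\<^esub> (A #> x) = A #> inv x"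
  by (simp add: inv_FactGroup coset_closed rcos_inv)

lemma coset_one: "\<one>\<^bsub>T\<^esub> = A #> \<one>"
  by (simp add: coset_join2 subgroup_axioms)

lemma coset_eq_iff: "x \<in> carrier S \<Longrightarrow> y \<in> carrier S \<Longrightarrow> A #> x = A #> y \<longleftrightarrow> x \<otimes> inv y \<in> A"
  by (metis is_group rcos_module repr_independence repr_independenceD subgroup_axioms)

lemma coset_absorb_left: "a \<in> A \<Longrightarrow> x \<in> carrier S \<Longrightarrow> A #> (a \<otimes> x) = A #> x"
  by (metis coset_mult_assoc coset_join2 is_group subgroup_axioms subset mem_carrier)

lemma coset_absorb_right: "a \<in> A \<Longrightarrow> x \<in> carrier S \<Longrightarrow> A #> (x \<otimes> a) = A #> x"
  using coset_absorb_left[of "x \<otimes> a \<otimes> inv x" x] inv_op_closed2[of x a] by (simp add: m_assoc A_closed)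

lemma u_closed: "t \<in> carrier T \<Longrightarrow> u t \<in> carrier S"
  using u_section by (auto simp: FactGroup_def RCOSETS_def intro: elemrcos_carrier[OF is_group])

lemma coset_u: "t \<in> carrier T \<Longrightarrow> A #> u t = t"
  using u_section repr_independence subgroup_axioms by (fastforce simp: FactGroup_def RCOSETS_def)

(* The action  ^t a = u(t) a u(t)^-1  can be computed with any representative of t,
   because A is abelian. *)
lemma cact_conj:
  assumes g: "g \<in> carrier S" and a: "a \<in> A"
  shows "cact S u (A #> g) a = g \<otimes> a \<otimes> inv g"
proof -
  define t where "t = A #> g"
  have t: "t \<in> carrier T" using coset_closed[OF g] by (simp add: t_def)
  define c where "c = g \<otimes> inv (u t)"
  have c: "c \<in> A"
    using coset_eq_iff[OF g u_closed[OF t]] coset_u[OF t] by (simp add: c_def t_def)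
  have g_eq: "g = c \<otimes> u t" using g u_closed[OF t] by (simp add: c_def m_assoc)
  have "g \<otimes> a \<otimes> inv g = c \<otimes> (u t \<otimes> a \<otimes> inv (u t)) \<otimes> inv c"
    using a c u_closed[OF t] by (simp add: g_eq inv_mult_group m_assoc A_closed)
  also have "\<dots> = u t \<otimes> a \<otimes> inv (u t)"
    using A_comm[OF c inv_op_closed2[OF u_closed[OF t] a]] a c u_closed[OF t]
    by (simp add: m_assoc A_closed)
  finally show ?thesis by (simp add: cact_def t_def)
qed

lemma cocyc_in_A:
  assumes t: "t \<in> carrier T" and t': "t' \<in> carrier T"
  shows "cocyc S A u t t' \<in> A"
proof -
  have tt': "t \<otimes>\<^bsub>T\<^esub> t' \<in> carrier T" using monoid.m_closed[OF group.axioms(1)[OF T_group] t t'] .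
  have "A #> (u t \<otimes> u t') = (A #> u t) \<otimes>\<^bsub>T\<^esub> (A #> u t')"
    using coset_mult[OF u_closed[OF t] u_closed[OF t']] by simp
  also have "\<dots> = A #> u (t \<otimes>\<^bsub>T\<^esub> t')"
    by (simp only: coset_u t t' tt')
  finally have "A #> (u t \<otimes> u t') = A #> u (t \<otimes>\<^bsub>T\<^esub> t')" .
  then show ?thesis
    using coset_eq_iff[OF m_closed[OF u_closed[OF t] u_closed[OF t']] u_closed[OF tt']]
    by (simp add: cocyc_def)
qed

definition right_coord :: "'a \<Rightarrow> 'a" where
  "right_coord x = x \<otimes> inv (u (A #> x))"

definition left_coord :: "'a \<Rightarrow> 'a" where
  "left_coord y = inv (u (A #> y)) \<otimes> y"

lemma right_coord_in_A: "x \<in> carrier S \<Longrightarrow> right_coord x \<in> A"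
  using coset_eq_iff[OF _ u_closed[OF coset_closed], of x x] coset_u[OF coset_closed, of x]
  by (simp add: right_coord_def)

lemma left_coord_in_A:
  assumes y: "y \<in> carrier S"
  shows "left_coord y \<in> A"
proof -
  let ?v = "u (A #> y)"
  have v: "?v \<in> carrier S" using u_closed[OF coset_closed[OF y]] .
  have "y \<otimes> inv ?v \<in> A" using right_coord_in_A[OF y] by (simp add: right_coord_def)
  then have "inv ?v \<otimes> (y \<otimes> inv ?v) \<otimes> ?v \<in> A" using inv_op_closed1[OF v] by blast
  then show ?thesis using y v by (simp add: left_coord_def m_assoc)
qed

lemma coset_right_decomp: "a \<in> A \<Longrightarrow> t \<in> carrier T \<Longrightarrow> A #> (a \<otimes> u t) = t"
  using coset_absorb_left u_closed coset_u by simp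

lemma coset_left_decomp: "b \<in> A \<Longrightarrow> t \<in> carrier T \<Longrightarrow> A #> (u t \<otimes> b) = t"
  using coset_absorb_right u_closed coset_u by simp

lemma right_coord_decomp: "a \<in> A \<Longrightarrow> t \<in> carrier T \<Longrightarrow> right_coord (a \<otimes> u t) = a"
  by (simp add: right_coord_def coset_right_decomp u_closed A_closed m_assoc)

lemma left_coord_decomp: "b \<in> A \<Longrightarrow> t \<in> carrier T \<Longrightarrow> left_coord (u t \<otimes> b) = b"
  by (simp add: left_coord_def coset_left_decomp u_closed A_closed)

lemma right_coord_mult:
  assumes x: "x \<in> carrier S" and x': "x' \<in> carrier S"
  shows "right_coord (x \<otimes> x') =
    right_coord x \<otimes> cact S u (A #> x) (right_coord x') \<otimes> cocyc S A u (A #> x) (A #> x')"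
  using x x' u_closed[OF coset_closed[OF x]] u_closed[OF coset_closed[OF x']]
    u_closed[OF coset_closed[OF m_closed[OF x x']]]
  by (simp add: right_coord_def cact_def cocyc_def rcos_sum m_assoc)

lemma cact_inv_u:
  assumes t: "t \<in> carrier T" and a: "a \<in> A"
  shows "cact S u (inv\<^bsub>T\<^esub> t) a = inv (u t) \<otimes> a \<otimes> u t"
proof -
  have "inv\<^bsub>T\<^esub> t = A #> inv (u t)"
    using coset_inv[OF u_closed[OF t]] coset_u[OF t] by simp
  then show ?thesis
    using cact_conj[OF inv_closed[OF u_closed[OF t]] a] u_closed[OF t] by simp
qed

lemma A_comm3: "a \<in> A \<Longrightarrow> b \<in> A \<Longrightarrow> c \<in> A \<Longrightarrow> a \<otimes> b \<otimes> c = c \<otimes> b \<otimes> a"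
  using A_comm[of a b] A_comm[of c "b \<otimes> a"] by (simp add: A_closed m_assoc)

(* Product law for left coordinates, written for the reversed product  y' y:  it is the
   twisted law with action  t \<mapsto> ^(t^-1)  and factor set  ^((t't)^-1) \<rho>(t',t). *)
lemma left_coord_mult:
  assumes y: "y \<in> carrier S" and y': "y' \<in> carrier S"
  shows "left_coord (y' \<otimes> y) =
    left_coord y \<otimes> cact S u (inv\<^bsub>T\<^esub> (A #> y)) (left_coord y') \<otimes>
    cact S u (inv\<^bsub>T\<^esub> ((A #> y') \<otimes>\<^bsub>T\<^esub> (A #> y))) (cocyc S A u (A #> y') (A #> y))"
proof -
  let ?v = "u (A #> y)" and ?v' = "u (A #> y')" and ?w = "u (A #> (y' \<otimes> y))"
  let ?r = "cocyc S A u (A #> y') (A #> y)"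
  have yy: "(A #> y') \<otimes>\<^bsub>T\<^esub> (A #> y) = A #> (y' \<otimes> y)" using coset_mult[OF y' y] .
  have closed: "?v \<in> carrier S" "?v' \<in> carrier S" "?w \<in> carrier S"
    using u_closed coset_closed y y' by blast+
  have r_in: "?r \<in> A" using cocyc_in_A coset_closed y y' by blast
  have r_eq: "?r = ?v' \<otimes> ?v \<otimes> inv ?w" unfolding cocyc_def yy ..
  have b_in: "left_coord y \<in> A" "left_coord y' \<in> A" using left_coord_in_A y y' by blast+
  have conj1: "cact S u (inv\<^bsub>T\<^esub> (A #> y)) (left_coord y') = inv ?v \<otimes> left_coord y' \<otimes> ?v"
    using cact_inv_u[OF coset_closed[OF y] b_in(2)] .
  have conj2: "cact S u (inv\<^bsub>T\<^esub> ((A #> y') \<otimes>\<^bsub>T\<^esub> (A #> y))) ?r = inv ?w \<otimes> ?r \<otimes> ?w"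
    unfolding yy using cact_inv_u[OF coset_closed[OF m_closed[OF y' y]] r_in] .
  have "left_coord y \<otimes> (inv ?v \<otimes> left_coord y' \<otimes> ?v) \<otimes> (inv ?w \<otimes> ?r \<otimes> ?w)
      = (inv ?w \<otimes> ?r \<otimes> ?w) \<otimes> (inv ?v \<otimes> left_coord y' \<otimes> ?v) \<otimes> left_coord y"
    using A_comm3 b_in inv_op_closed1 closed r_in by simp
  also have "\<dots> = left_coord (y' \<otimes> y)"
    using closed y y' by (simp add: r_eq left_coord_def m_assoc)
  finally show ?thesis unfolding conj1 conj2 by (rule sym)
qed

end

(* The situation of the theorem: additionally an anti-automorphism \<phi> of T. *)
locale anti_twisted_extension = abelian_extension A S u for A and S :: "('a, 'm) monoid_scheme" (structure)
  and u +
  fixes \<phi> :: "'a set \<Rightarrow> 'a set"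
  assumes anti: "anti_automorphism (S Mod A) \<phi>"
begin

abbreviation G where "G \<equiv> S \<times>\<times> opp_group S"

lemma G_group: "group G"
  by (rule DirProd_group[OF is_group opp_group_is_group])

lemma G_inv: "x \<in> carrier S \<Longrightarrow> y \<in> carrier S \<Longrightarrow> inv\<^bsub>G\<^esub> (x, y) = (inv x, inv y)"
  by (simp add: is_group opp_group_is_group opp_group_inv)

lemma phi_closed: "t \<in> carrier T \<Longrightarrow> \<phi> t \<in> carrier T"
  using group.anti_automorphism_closed[OF T_group anti] .

lemma phi_mult: "t \<in> carrier T \<Longrightarrow> s \<in> carrier T \<Longrightarrow> \<phi> (t \<otimes>\<^bsub>T\<^esub> s) = \<phi> s \<otimes>\<^bsub>T\<^esub> \<phi> t"
  using group.anti_automorphism_mult[OF T_group anti] .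

lemma phi_one: "\<phi> \<one>\<^bsub>T\<^esub> = \<one>\<^bsub>T\<^esub>"
  using group.anti_automorphism_one[OF T_group anti] .

lemma phi_inv: "t \<in> carrier T \<Longrightarrow> \<phi> (inv\<^bsub>T\<^esub> t) = inv\<^bsub>T\<^esub> (\<phi> t)"
  using group.anti_automorphism_inv[OF T_group anti] .

definition L :: "('a \<times> 'a) set" where
  "L = {(x, y). x \<in> carrier S \<and> y \<in> carrier S \<and> A #> y = \<phi> (A #> x)}"

lemma L_parametrisation:
  "{(a \<otimes> u t, b \<otimes> u (\<phi> t)) | a b t. a \<in> A \<and> b \<in> A \<and> t \<in> carrier T} = L"
proof (intro equalityI subsetI)
  fix z assume "z \<in> {(a \<otimes> u t, b \<otimes> u (\<phi> t)) | a b t. a \<in> A \<and> b \<in> A \<and> t \<in> carrier T}"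
  then show "z \<in> L"
    by (auto simp: L_def coset_right_decomp u_closed phi_closed A_closed)
next
  fix z assume "z \<in> L"
  then obtain x y where z: "z = (x, y)" "x \<in> carrier S" "y \<in> carrier S" "A #> y = \<phi> (A #> x)"
    unfolding L_def by blast
  have t: "A #> x \<in> carrier T" using coset_closed[OF z(2)] .
  have "x = right_coord x \<otimes> u (A #> x)" "y = right_coord y \<otimes> u (\<phi> (A #> x))"
    using z t u_closed[OF t] u_closed[OF coset_closed[OF z(3)]] by (simp_all add: right_coord_def m_assoc)
  then show "z \<in> {(a \<otimes> u t, b \<otimes> u (\<phi> t)) | a b t. a \<in> A \<and> b \<in> A \<and> t \<in> carrier T}"
    using z t right_coord_in_A by blast
qed

(* L is a subgroup of G, because \<phi> reverses products just as S^op does. *)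
lemma L_subgroup: "subgroup L G"
proof (rule group.subgroupI[OF G_group])
  show "L \<subseteq> carrier G" unfolding L_def by auto
  have "(\<one>, \<one>) \<in> L"
    using phi_one coset_one by (simp add: L_def)
  then show "L \<noteq> {}" by blast
next
  fix g assume "g \<in> L"
  then obtain x y where g: "g = (x, y)" "x \<in> carrier S" "y \<in> carrier S" "A #> y = \<phi> (A #> x)"
    unfolding L_def by blast
  have "A #> inv y = \<phi> (A #> inv x)"
    using g by (simp add: coset_inv[symmetric] phi_inv coset_closed)
  then show "inv\<^bsub>G\<^esub> g \<in> L" using g G_inv by (simp add: L_def)
next
  fix g h assume "g \<in> L" "h \<in> L"
  then obtain x y x' y' where g: "g = (x, y)" "x \<in> carrier S" "y \<in> carrier S" "A #> y = \<phi> (A #> x)"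
    and h: "h = (x', y')" "x' \<in> carrier S" "y' \<in> carrier S" "A #> y' = \<phi> (A #> x')"
    unfolding L_def by blast
  have "A #> (y' \<otimes> y) = \<phi> (A #> (x \<otimes> x'))"
    using g h coset_mult[symmetric] phi_mult coset_closed by metis
  then show "g \<otimes>\<^bsub>G\<^esub> h \<in> L" using g h by (simp add: L_def)
qed

abbreviation TW where
  "TW \<equiv> twisted_sdp (S\<lparr>carrier := A\<rparr> \<times>\<times> S\<lparr>carrier := A\<rparr>) T
     (\<lambda>t (a, a'). (cact S u t a, cact S u (\<phi> (inv\<^bsub>T\<^esub> t)) a'))
     (\<lambda>t t'. (cocyc S A u t t', cact S u (inv\<^bsub>T\<^esub> (\<phi> t' \<otimes>\<^bsub>T\<^esub> \<phi> t)) (cocyc S A u (\<phi> t') (\<phi> t))))"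

(* The coordinate map: the first factor is read in right coordinates, the second
   (which lives in the opposite group) in left coordinates. *)
definition psi :: "'a \<times> 'a \<Rightarrow> ('a \<times> 'a) \<times> 'a set" where
  "psi z = ((right_coord (fst z), left_coord (snd z)), A #> fst z)"

lemma psi_bij: "bij_betw psi L ((A \<times> A) \<times> carrier T)"
proof (rule bij_betw_byWitness[where f' = "\<lambda>((a, b), t). (a \<otimes> u t, u (\<phi> t) \<otimes> b)"])
  show "\<forall>z\<in>L. (\<lambda>((a, b), t). (a \<otimes> u t, u (\<phi> t) \<otimes> b)) (psi z) = z"
    by (auto simp: L_def psi_def right_coord_def left_coord_def m_assoc u_closed coset_closed phi_closed)
  show "\<forall>w\<in>(A \<times> A) \<times> carrier T. psi ((\<lambda>((a, b), t). (a \<otimes> u t, u (\<phi> t) \<otimes> b)) w) = w"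
    by (auto simp: psi_def coset_right_decomp right_coord_decomp left_coord_decomp phi_closed)
  show "psi ` L \<subseteq> (A \<times> A) \<times> carrier T"
    by (auto simp: L_def psi_def right_coord_in_A left_coord_in_A coset_closed)
  show "(\<lambda>((a, b), t). (a \<otimes> u t, u (\<phi> t) \<otimes> b)) ` ((A \<times> A) \<times> carrier T) \<subseteq> L"
    by (auto simp: L_def coset_right_decomp coset_left_decomp u_closed phi_closed A_closed)
qed

lemma psi_value:
  assumes a: "a \<in> A" and b: "b \<in> A" and t: "t \<in> carrier T"
  shows "psi (a \<otimes> u t, b \<otimes> u (\<phi> t)) = ((a, cact S u (inv\<^bsub>T\<^esub> (\<phi> t)) b), t)"
proof -
  have s: "\<phi> t \<in> carrier T" using phi_closed[OF t] .
  have "left_coord (b \<otimes> u (\<phi> t)) = inv (u (\<phi> t)) \<otimes> b \<otimes> u (\<phi> t)"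
    using b s u_closed[OF s] by (simp add: left_coord_def coset_right_decomp m_assoc A_closed)
  then show ?thesis
    using a b t s by (simp add: psi_def coset_right_decomp right_coord_decomp cact_inv_u)
qed

(* psi is multiplicative: the two coordinate product laws, with  Ay = \<phi>(Ax). *)
lemma psi_mult:
  assumes g: "g \<in> L" and h: "h \<in> L"
  shows "psi (g \<otimes>\<^bsub>G\<^esub> h) = psi g \<otimes>\<^bsub>TW\<^esub> psi h"
proof -
  obtain x y where g: "g = (x, y)" "x \<in> carrier S" "y \<in> carrier S" "A #> y = \<phi> (A #> x)"
    using assms unfolding L_def by blast
  obtain x' y' where h: "h = (x', y')" "x' \<in> carrier S" "y' \<in> carrier S" "A #> y' = \<phi> (A #> x')"
    using assms unfolding L_def by blast
  have "inv\<^bsub>T\<^esub> (A #> y) = \<phi> (inv\<^bsub>T\<^esub> (A #> x))"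
    using g phi_inv coset_closed by simp
  then have "left_coord (y' \<otimes> y) =
      left_coord y \<otimes> cact S u (\<phi> (inv\<^bsub>T\<^esub> (A #> x))) (left_coord y') \<otimes>
      cact S u (inv\<^bsub>T\<^esub> (\<phi> (A #> x') \<otimes>\<^bsub>T\<^esub> \<phi> (A #> x))) (cocyc S A u (\<phi> (A #> x')) (\<phi> (A #> x)))"
    using left_coord_mult[OF g(3) h(3)] g(4) h(4) by simp
  then show ?thesis
    using g h right_coord_mult[OF g(2) h(2)]
    by (simp add: psi_def twisted_sdp_def rcos_sum)
qed

lemma psi_iso: "psi \<in> iso (G\<lparr>carrier := L\<rparr>) TW"
proof -
  have "psi \<in> L \<rightarrow> carrier TW"
    using psi_bij by (auto simp: bij_betw_def twisted_sdp_def)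
  then show ?thesis
    using psi_bij psi_mult by (simp add: iso_def hom_def twisted_sdp_def)
qed

definition defect :: "'a \<times> 'a \<Rightarrow> 'a set" where
  "defect z = inv\<^bsub>T\<^esub> (A #> snd z) \<otimes>\<^bsub>T\<^esub> \<phi> (A #> fst z)"

lemma defect_closed: "z \<in> carrier G \<Longrightarrow> defect z \<in> carrier T"
  using group.inv_closed[OF T_group] monoid.m_closed[OF group.axioms(1)[OF T_group]]
  by (auto simp: defect_def coset_closed phi_closed)

lemma kernel_defect: "kernel G T defect = L"
proof -
  interpret T: group T by (rule T_group)
  have "defect (x, y) = \<one>\<^bsub>T\<^esub> \<longleftrightarrow> A #> y = \<phi> (A #> x)"
    if "x \<in> carrier S" "y \<in> carrier S" for x y
  proof -
    have cl: "A #> y \<in> carrier T" "\<phi> (A #> x) \<in> carrier T"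
      using that coset_closed phi_closed by auto
    have "defect (x, y) = \<one>\<^bsub>T\<^esub> \<longleftrightarrow> \<phi> (A #> x) = (A #> y) \<otimes>\<^bsub>T\<^esub> \<one>\<^bsub>T\<^esub>"
      unfolding defect_def fst_conv snd_conv by (intro T.inv_solve_left' cl T.one_closed)
    then show ?thesis using T.r_one[OF cl(1)] by metis
  qed
  then show ?thesis by (auto simp: kernel_def L_def)
qed

lemma defect_classifies_cosets:
  assumes g: "g \<in> carrier G" and g': "g' \<in> carrier G"
  shows "defect g = defect g' \<longleftrightarrow> g <#\<^bsub>G\<^esub> L = g' <#\<^bsub>G\<^esub> L"
proof -
  interpret T: group T by (rule T_group)
  obtain x y x' y' where xy: "g = (x, y)" "x \<in> carrier S" "y \<in> carrier S"
    and xy': "g' = (x', y')" "x' \<in> carrier S" "y' \<in> carrier S"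
    using g g' by auto
  have cl: "A #> x \<in> carrier T" "A #> y \<in> carrier T" "A #> x' \<in> carrier T" "A #> y' \<in> carrier T"
    using xy xy' coset_closed by auto
  have "g <#\<^bsub>G\<^esub> L = g' <#\<^bsub>G\<^esub> L \<longleftrightarrow> inv\<^bsub>G\<^esub> g \<otimes>\<^bsub>G\<^esub> g' \<in> L"
    by (rule group.l_coset_eq_iff[OF G_group L_subgroup g g'])
  also have "\<dots> \<longleftrightarrow> A #> (y' \<otimes> inv y) = \<phi> (A #> (inv x \<otimes> x'))"
    using xy xy' G_inv by (simp add: L_def)
  also have "\<dots> \<longleftrightarrow> (A #> y') \<otimes>\<^bsub>T\<^esub> inv\<^bsub>T\<^esub> (A #> y) = \<phi> (A #> x') \<otimes>\<^bsub>T\<^esub> inv\<^bsub>T\<^esub> (\<phi> (A #> x))"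
    using xy xy' cl
    by (simp only: coset_mult[symmetric] coset_inv inv_closed coset_closed phi_mult T.inv_closed phi_inv[symmetric])
  also have "\<dots> \<longleftrightarrow> defect g = defect g'"
    unfolding defect_def xy xy' fst_conv snd_conv
    by (rule T.inv_mult_eq_iff[symmetric]) (use cl phi_closed in auto)
  finally show ?thesis by (rule sym)
qed

lemma defect_onto: "defect ` carrier G = carrier T"
proof (intro equalityI subsetI)
  interpret T: group T by (rule T_group)
  fix t assume t: "t \<in> carrier T"
  have coset_inv_u: "A #> inv (u t) = inv\<^bsub>T\<^esub> t"
    using coset_inv[OF u_closed[OF t]] coset_u[OF t] by simp
  have "defect (\<one>, inv (u t)) = inv\<^bsub>T\<^esub> (inv\<^bsub>T\<^esub> t) \<otimes>\<^bsub>T\<^esub> \<phi> \<one>\<^bsub>T\<^esub>"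
    by (simp only: defect_def fst_conv snd_conv coset_one coset_inv_u)
  also have "\<dots> = t"
    by (simp only: phi_one T.inv_inv[OF t] T.r_one[OF t])
  finally have "defect (\<one>, inv (u t)) = t" .
  moreover have "(\<one>, inv (u t)) \<in> carrier G" using u_closed[OF t] by simp
  ultimately show "t \<in> defect ` carrier G" by (metis image_eqI)
qed (use defect_closed in blast)

lemma defect_hom:
  assumes T_comm: "comm_group T"
  shows "defect \<in> hom G T"
proof (rule homI)
  interpret T: comm_group T by (rule T_comm)
  fix g h assume g: "g \<in> carrier G" and h: "h \<in> carrier G"
  obtain x y x' y' where xy: "g = (x, y)" "x \<in> carrier S" "y \<in> carrier S"
    and xy': "h = (x', y')" "x' \<in> carrier S" "y' \<in> carrier S"
    using g h by auto
  have cl: "A #> x \<in> carrier T" "A #> y \<in> carrier T" "A #> x' \<in> carrier T" "A #> y' \<in> carrier T"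
    using xy xy' coset_closed by auto
  have "defect (g \<otimes>\<^bsub>G\<^esub> h) = inv\<^bsub>T\<^esub> ((A #> y') \<otimes>\<^bsub>T\<^esub> (A #> y)) \<otimes>\<^bsub>T\<^esub> (\<phi> (A #> x') \<otimes>\<^bsub>T\<^esub> \<phi> (A #> x))"
    using xy xy' cl by (simp only: defect_def mult_DirProd opp_group_simps fst_conv snd_conv
        coset_mult[symmetric] phi_mult)
  also have "\<dots> = defect g \<otimes>\<^bsub>T\<^esub> defect h"
    unfolding defect_def xy xy' fst_conv snd_conv
    by (rule T.inv_mult_rearrange) (use cl phi_closed in auto)
  finally show "defect (g \<otimes>\<^bsub>G\<^esub> h) = defect g \<otimes>\<^bsub>T\<^esub> defect h" .
qed (rule defect_closed)

lemma defect_on_cosets: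
  "g \<in> carrier G \<Longrightarrow> the_elem (defect ` (g <#\<^bsub>G\<^esub> L)) = defect g"
  using group.left_coset_classifier_value[OF G_group L_subgroup _ defect_classifies_cosets] .

lemma defect_cosets_bij: "bij_betw (\<lambda>C. the_elem (defect ` C)) {g <#\<^bsub>G\<^esub> L | g. g \<in> carrier G} (carrier T)"
  using group.left_coset_classifier_bij[OF G_group L_subgroup defect_classifies_cosets defect_onto] .

(* For abelian T, L is the kernel of the defect, hence normal, and the first isomorphism
   theorem turns the induced map into an isomorphism  G/L \<cong> T. *)
lemma quotient_by_L_iso:
  assumes "comm_group T"
  shows "L \<lhd> G \<and> (\<lambda>C. the_elem (defect ` C)) \<in> iso (G Mod L) T"
proof -
  interpret group_hom G T defect
    using G_group T_group defect_hom[OF assms] by (simp add: group_hom_def group_hom_axioms_def)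
  show ?thesis
    using normal_kernel FactGroup_iso_set[OF defect_onto] by (simp add: kernel_defect)
qed

end

theorem lemma3p3:
  fixes S :: "('a, 'm) monoid_scheme" and A :: "'a set"
    and u :: "'a set \<Rightarrow> 'a" and \<phi> :: "'a set \<Rightarrow> 'a set"
  defines "T \<equiv> S Mod A"
    and "act \<equiv> cact S u"
    and "\<rho> \<equiv> cocyc S A u"
    and "G \<equiv> S \<times>\<times> opp_group S"
    and "L \<equiv> {(a \<otimes>\<^bsub>S\<^esub> u t, b \<otimes>\<^bsub>S\<^esub> u (\<phi> t)) | a b t. a \<in> A \<and> b \<in> A \<and> t \<in> carrier (S Mod A)}"
    and "actbar \<equiv> (\<lambda>t (a, a'). (cact S u t a, cact S u (\<phi> (inv\<^bsub>S Mod A\<^esub> t)) a'))"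
    and "\<rho>bar \<equiv> (\<lambda>t t'. (cocyc S A u t t',
                    cact S u (inv\<^bsub>S Mod A\<^esub> (\<phi> t' \<otimes>\<^bsub>S Mod A\<^esub> \<phi> t)) (cocyc S A u (\<phi> t') (\<phi> t))))"
  assumes "group S" and "finite (carrier S)"
    and "A \<lhd> S" and "comm_group (S\<lparr>carrier := A\<rparr>)"
    and "\<forall>t\<in>carrier T. u t \<in> t" and "u \<one>\<^bsub>T\<^esub> = \<one>\<^bsub>S\<^esub>"
    and "anti_automorphism T \<phi>" and "is_inner T (\<phi> \<circ> \<phi>)"
  shows
    "subgroup L G \<and>
     (\<exists>\<psi>. \<psi> \<in> iso (G\<lparr>carrier := L\<rparr>)
                  (twisted_sdp (S\<lparr>carrier := A\<rparr> \<times>\<times> S\<lparr>carrier := A\<rparr>) T actbar \<rho>bar) \<and>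
          (\<forall>a\<in>A. \<forall>b\<in>A. \<forall>t\<in>carrier T.
             \<psi> (a \<otimes>\<^bsub>S\<^esub> u t, b \<otimes>\<^bsub>S\<^esub> u (\<phi> t)) = ((a, act (inv\<^bsub>T\<^esub> (\<phi> t)) b), t)))
     \<and> (\<exists>F. bij_betw F {g <#\<^bsub>G\<^esub> L | g. g \<in> carrier G} (carrier T) \<and>
          (\<forall>x\<in>carrier S. \<forall>y\<in>carrier S.
             F ((x, y) <#\<^bsub>G\<^esub> L) = inv\<^bsub>T\<^esub> (A #>\<^bsub>S\<^esub> y) \<otimes>\<^bsub>T\<^esub> \<phi> (A #>\<^bsub>S\<^esub> x)) \<and>
          (comm_group T \<longrightarrow> L \<lhd> G \<and> F \<in> iso (G Mod L) T))"
proof -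
  interpret E: anti_twisted_extension A S u \<phi>
  proof (intro anti_twisted_extension.intro abelian_extension.intro)
    show "A \<lhd> S" by fact
    show "abelian_extension_axioms A S u"
      using assms(11,12) unfolding abelian_extension_axioms_def T_def by blast
    show "anti_twisted_extension_axioms A S \<phi>"
      using assms(14) unfolding anti_twisted_extension_axioms_def T_def .
  qed
  have L_eq: "L = E.L"
    unfolding L_def by (rule E.L_parametrisation)
  have sdp_eq: "twisted_sdp (S\<lparr>carrier := A\<rparr> \<times>\<times> S\<lparr>carrier := A\<rparr>) T actbar \<rho>bar = E.TW"
    unfolding T_def actbar_def \<rho>bar_def ..
  show ?thesis
  proof (intro conjI exI)
    show "subgroup L G" unfolding L_eq G_def by (rule E.L_subgroup)
    show "E.psi \<in> iso (G\<lparr>carrier := L\<rparr>) (twisted_sdp (S\<lparr>carrier := A\<rparr> \<times>\<times> S\<lparr>carrier := A\<rparr>) T actbar \<rho>bar)"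
      unfolding sdp_eq L_eq G_def by (rule E.psi_iso)
    show "\<forall>a\<in>A. \<forall>b\<in>A. \<forall>t\<in>carrier T.
        E.psi (a \<otimes>\<^bsub>S\<^esub> u t, b \<otimes>\<^bsub>S\<^esub> u (\<phi> t)) = ((a, act (inv\<^bsub>T\<^esub> (\<phi> t)) b), t)"
      unfolding act_def T_def using E.psi_value by blast
    show "bij_betw (\<lambda>C. the_elem (E.defect ` C)) {g <#\<^bsub>G\<^esub> L | g. g \<in> carrier G} (carrier T)"
      unfolding G_def L_eq T_def by (rule E.defect_cosets_bij)
  qed (use E.defect_on_cosets E.quotient_by_L_iso in \<open>auto simp: G_def L_eq T_def E.defect_def\<close>)
qed

end
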